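(* Let $n\ge 2$ and let $\mathsf{T}$ be a string of length $n$ over $\{\mathtt{a},\mathtt{b}\}$ ($\mathtt{a}<\mathtt{b}$) whose suffix array $P=\mathsf{SA}_{\mathsf{T}}=[p_1,\ldots,p_n]$ is an arithmetically progressed permutation with ratio $k$ and $p_1=1$. Let $m$ be the number of occurrences of $\mathtt{a}$ in $\mathsf{T}$ and let $\mathsf{T}'=\mathsf{T}[2..n]\mathsf{T}[1]$. Then $\mathsf{SA}_{\mathsf{T}'}[i]=p_i-1\bmod n$ for all $i$, and this sequence equals the $m$-th cyclic rotation of $P$, i.e. $\mathsf{SA}_{\mathsf{T}'}[i]=P[(i+m)\bmod n]$ for all $i\in[1..n]$; in particular $\mathsf{SA}_{\mathsf{T}'}[1]=n$ and $\mathsf{SA}_{\mathsf{T}'}$ is arithmetically progressed with ratio $k$. Moreover $\mathsf{BWT}_{\mathsf{T}}=\mathsf{BWT}_{\mathsf{T}'}$.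
   Context: Lexicographic order with a proper prefix smaller than the longer string; suffix array $\mathsf{SA}_{\mathsf{T}}$: permutation of $[1..n]$ such that $\mathsf{T}[\mathsf{SA}_{\mathsf{T}}[i]..n]$ is the $i$-th smallest suffix. $x\bmod n$ denotes the representative of $x$ modulo $n$ in $[1..n]$. An arithmetically progressed permutation of length $n$ with ratio $k\in[1..n-1]$ is a permutation $P=[p_1,\ldots,p_n]$ of $[1..n]$ with $p_{i+1}=p_i+k\bmod n$. BWT: $\mathsf{BWT}_{\mathsf{T}}[i]=\mathsf{T}[\mathsf{SA}_{\mathsf{T}}[i]-1\bmod n]$. *)

theory Defs
  imports Main
begin

text \<open>Strings over the binary alphabet {a,b} are lists of naturals with entries in {0,1},
  where 0 encodes a and 1 encodes b (so a < b). Positions are 1-based in the paper;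
  position i of a list xs is xs ! (i - 1).\<close>

definition at :: "'a list \<Rightarrow> nat \<Rightarrow> 'a" where
  "at xs i = xs ! (i - 1)"

definition modn :: "int \<Rightarrow> nat \<Rightarrow> nat" where
  "modn x n = nat ((x - 1) mod int n) + 1"

definition lex_less :: "nat list \<Rightarrow> nat list \<Rightarrow> bool" where
  "lex_less xs ys \<longleftrightarrow> (xs, ys) \<in> lexord {(x, y). x < y}"

definition suffix_at :: "nat list \<Rightarrow> nat \<Rightarrow> nat list" where
  "suffix_at T i = drop (i - 1) T"

definition is_permutation_1n :: "nat list \<Rightarrow> nat \<Rightarrow> bool" where
  "is_permutation_1n P n \<longleftrightarrow> length P = n \<and> distinct P \<and> set P = {1..n}"

definition is_suffix_array :: "nat list \<Rightarrow> nat list \<Rightarrow> bool" where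
  "is_suffix_array T SA \<longleftrightarrow> is_permutation_1n SA (length T) \<and>
     (\<forall>i j. 1 \<le> i \<and> i < j \<and> j \<le> length T \<longrightarrow>
        lex_less (suffix_at T (at SA i)) (suffix_at T (at SA j)))"

definition suffix_array :: "nat list \<Rightarrow> nat list" where
  "suffix_array T = (THE SA. is_suffix_array T SA)"

definition arith_prog :: "nat list \<Rightarrow> nat \<Rightarrow> bool" where
  "arith_prog P k \<longleftrightarrow> (let n = length P in
     is_permutation_1n P n \<and> 1 \<le> k \<and> k \<le> n - 1 \<and>
     (\<forall>i. 1 \<le> i \<and> i < n \<longrightarrow> at P (i + 1) = modn (int (at P i) + int k) n))"

definition bwt :: "nat list \<Rightarrow> nat list" where
  "bwt T = map (\<lambda>p. at T (modn (int p - 1) (length T))) (suffix_array T)"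

end

theory Submission
  imports Defs "HOL-Library.List_Lexorder" "HOL-Library.Multiset"
begin

(* Since T is its own least suffix, its first letter is smaller than its last one, so T starts
   with a and ends with b. The one-letter suffix b is the least suffix starting with b, hence it
   sits right after the m suffixes starting with a: P[m+1] = n, i.e. 1 + m k = 0 (mod n).
   Moving the leading a to the end appends a to every other suffix, which preserves their order,
   and turns T itself into the least suffix a; so SA_T' is P decremented mod n. As
   P[i+m] = P[i] + m k = P[i] - 1 (mod n), this is the m-th rotation of P, and the BWT is
   unchanged because decrementing the suffix array undoes the shift of the text. *)

lemma lex_less_iff_less: "lex_less xs ys \<longleftrightarrow> xs < ys"
  by (simp add: lex_less_def list_less_def)

lemma at_map: "1 \<le> i \<Longrightarrow> i \<le> length xs \<Longrightarrow> at (map f xs) i = f (at xs i)"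
  by (simp add: at_def)

lemma suffix_at_eq_Cons:
  "1 \<le> q \<Longrightarrow> q \<le> length T \<Longrightarrow> suffix_at T q = at T q # drop q T"
  unfolding suffix_at_def at_def using Cons_nth_drop_Suc[of "q - 1" T] by simp

lemma inj_on_suffix_at: "inj_on (suffix_at T) {1..length T}"
proof (rule inj_onI)
  fix x y assume "x \<in> {1..length T}" "y \<in> {1..length T}" "suffix_at T x = suffix_at T y"
  then have "length (suffix_at T x) = length (suffix_at T y)" by simp
  with \<open>x \<in> _\<close> \<open>y \<in> _\<close> show "x = y" by (auto simp: suffix_at_def)
qed

lemma permutation_at_mem:
  assumes "is_permutation_1n P n" "1 \<le> i" "i \<le> n"
  shows "at P i \<in> {1..n}"
proof -
  have "P ! (i - 1) \<in> set P" using assms by (intro nth_mem) (simp add: is_permutation_1n_def)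
  then show ?thesis using assms(1) by (simp add: is_permutation_1n_def at_def)
qed

lemma permutation_at_inj:
  assumes "is_permutation_1n P n" "1 \<le> i" "i \<le> n" "1 \<le> j" "j \<le> n" "at P i = at P j"
  shows "i = j"
proof -
  have "P ! (i - 1) = P ! (j - 1)" using assms(6) by (simp add: at_def)
  then have "i - 1 = j - 1"
    using assms(1-5) nth_eq_iff_index_eq[of P "i - 1" "j - 1"] by (simp add: is_permutation_1n_def)
  then show ?thesis using assms(2,4) by simp
qed

lemma permutation_at_surj:
  assumes "is_permutation_1n P n" "q \<in> {1..n}"
  obtains i where "1 \<le> i" "i \<le> n" "at P i = q"
proof -
  from assms obtain i where "i < n" "P ! i = q"
    unfolding is_permutation_1n_def by (metis in_set_conv_nth)
  then show ?thesis using that[of "i + 1"] by (simp add: at_def)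
qed

lemma mset_map_at_permutation:
  assumes "is_permutation_1n P (length T)"
  shows "mset (map (at T) P) = mset T"
proof -
  have "mset P = mset [1..<length T + 1]"
    using assms set_eq_iff_mset_eq_distinct[of P "[1..<length T + 1]"]
    by (simp del: upt_Suc add: is_permutation_1n_def atLeastLessThanSuc_atLeastAtMost)
  then have "mset (map (at T) P) = mset (map (at T) [1..<length T + 1])"
    by (simp only: mset_map)
  also have "map (at T) [1..<length T + 1] = T"
    by (rule nth_equalityI) (auto simp del: upt_Suc simp: at_def nth_upt)
  finally show ?thesis .
qed

lemma is_suffix_array_less:
  assumes "is_suffix_array T SA" "1 \<le> i" "i < j" "j \<le> length T"
  shows "suffix_at T (at SA i) < suffix_at T (at SA j)"
  using assms by (auto simp: is_suffix_array_def lex_less_iff_less)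

lemma is_suffix_array_unique:
  assumes "is_suffix_array T A" "is_suffix_array T B"
  shows "A = B"
proof -
  have sorted: "sorted_wrt (<) (map (suffix_at T) SA)" if "is_suffix_array T SA" for SA
  proof -
    have "length SA = length T"
      using that by (simp add: is_suffix_array_def is_permutation_1n_def)
    then show ?thesis
      using is_suffix_array_less[OF that, of "_ + 1" "_ + 1"]
      by (auto simp: sorted_wrt_iff_nth_less at_def)
  qed
  have "set A = {1..length T}" "set B = {1..length T}"
    using assms by (auto simp: is_suffix_array_def is_permutation_1n_def)
  then show ?thesis
    using inj_on_suffix_at sorted[OF assms(1)] sorted[OF assms(2)]
    by (intro map_sorted_distinct_set_unique[where f = "suffix_at T"])
       (auto simp: strict_sorted_iff)
qed

lemma ex_is_suffix_array: "\<exists>SA. is_suffix_array T SA"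
proof -
  define SA where "SA = sort_key (suffix_at T) [1..<length T + 1]"
  have set_SA: "set SA = {1..length T}" and "distinct SA" and len_SA: "length SA = length T"
    unfolding SA_def by (auto simp del: upt_Suc)
  then have "sorted_wrt (<) (map (suffix_at T) SA)"
    using inj_on_suffix_at sorted_sort_key[of "suffix_at T"]
    by (auto simp: strict_sorted_iff distinct_map SA_def)
  then have "is_suffix_array T SA"
    using set_SA \<open>distinct SA\<close> len_SA
    by (auto simp: is_suffix_array_def is_permutation_1n_def lex_less_iff_less at_def
                   sorted_wrt_iff_nth_less)
  then show ?thesis ..
qed

lemma is_suffix_array_suffix_array: "is_suffix_array T (suffix_array T)"
  unfolding suffix_array_def
  using ex_is_suffix_array is_suffix_array_unique by (metis theI)

lemma suffix_array_eqI: "is_suffix_array T SA \<Longrightarrow> suffix_array T = SA"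
  using is_suffix_array_suffix_array is_suffix_array_unique by blast

lemma modn_bounds: "0 < n \<Longrightarrow> 1 \<le> modn x n \<and> modn x n \<le> n"
proof -
  assume "0 < n"
  then have "0 \<le> (x - 1) mod int n" "(x - 1) mod int n < int n" by simp_all
  then show ?thesis unfolding modn_def by linarith
qed

lemma int_modn_mod: "0 < n \<Longrightarrow> int (modn x n) mod int n = x mod int n"
  unfolding modn_def using mod_add_right_eq[of 1 "x - 1" "int n"] by simp

lemma modn_cong: "x mod int n = y mod int n \<Longrightarrow> modn x n = modn y n"
  unfolding modn_def by (metis mod_diff_cong)

lemma modn_of_nat: "1 \<le> y \<Longrightarrow> y \<le> n \<Longrightarrow> modn (int y) n = y"
  unfolding modn_def by (simp add: mod_pos_pos_trivial of_nat_diff[symmetric])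

lemma modn_add_modn: "0 < n \<Longrightarrow> modn (int (modn x n) + y) n = modn (x + y) n"
  by (intro modn_cong mod_add_cong int_modn_mod) simp_all

lemma modn_pred:
  assumes "1 \<le> p" "p \<le> n"
  shows "modn (int p - 1) n = (if p = 1 then n else p - 1)"
proof (cases "p = 1")
  case True
  have "(-1) mod int n = int n - 1"
    using assms zmod_minus1[of "int n"] by simp
  then show ?thesis using True assms by (simp add: modn_def)
next
  case False
  then show ?thesis using assms modn_of_nat[of "p - 1" n] by (simp add: of_nat_diff)
qed

lemma permutation_map_modn_add:
  assumes "is_permutation_1n P n"
  shows "is_permutation_1n (map (\<lambda>p. modn (int p + c) n) P) n"
proof -
  define g where "g p = modn (int p + c) n" for p
  have inverse: "modn (int (g p) - c) n = p" if "p \<in> {1..n}" for p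
    using that modn_add_modn[of n "int p + c" "- c"] modn_of_nat[of p n]
    by (simp add: g_def)
  then have "inj_on g {1..n}" by (rule inj_on_inverseI)
  moreover have "g ` {1..n} \<subseteq> {1..n}" using modn_bounds by (force simp: g_def)
  ultimately have "g ` {1..n} = {1..n}" by (simp add: endo_inj_surj)
  with \<open>inj_on g {1..n}\<close> show ?thesis
    using assms by (simp add: is_permutation_1n_def distinct_map g_def[abs_def])
qed

lemma arith_prog_step:
  "arith_prog P k \<Longrightarrow> 1 \<le> i \<Longrightarrow> i < length P \<Longrightarrow>
    at P (i + 1) = modn (int (at P i) + int k) (length P)"
  by (simp add: arith_prog_def Let_def)

lemma arith_prog_at:
  assumes "arith_prog P k" "1 \<le> j" "j \<le> length P"
  shows "at P j = modn (int (at P 1) + (int j - 1) * int k) (length P)"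
  using assms(2,3)
proof (induction j rule: nat_induct_at_least)
  case base
  have "is_permutation_1n P (length P)" using assms(1) by (simp add: arith_prog_def Let_def)
  then show ?case using permutation_at_mem[of P "length P" 1] base by (simp add: modn_of_nat)
next
  case (Suc j)
  then have "0 < length P" by linarith
  have "at P (Suc j) = modn (int (at P j) + int k) (length P)"
    using arith_prog_step[OF assms(1), of j] Suc by simp
  also have "\<dots> = modn (int (at P 1) + (int j - 1) * int k + int k) (length P)"
    using Suc modn_add_modn[OF \<open>0 < length P\<close>] by simp
  finally show ?case by (simp add: algebra_simps)
qed

lemma arith_prog_at_modn_add:
  assumes "arith_prog P k" "1 \<le> i" "i \<le> length P"
  shows "at P (modn (int i + c) (length P)) = modn (int (at P i) + c * int k) (length P)"
proof -
  define n where "n = length P"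
  define j where "j = modn (int i + c) n"
  have "0 < n" using assms(2,3) unfolding n_def by linarith
  then have j: "1 \<le> j" "j \<le> n" "int j mod int n = (int i + c) mod int n"
    using modn_bounds int_modn_mod by (auto simp: j_def)
  have "(int (at P 1) + (int j - 1) * int k) mod int n
        = (int (at P 1) + (int i + c - 1) * int k) mod int n"
    using j(3) by (metis mod_add_cong mod_diff_cong mod_mult_cong)
  then have "at P j = modn (int (at P 1) + (int i - 1) * int k + c * int k) n"
    using arith_prog_at[OF assms(1) j(1,2)[unfolded n_def]]
    by (auto intro: modn_cong simp: n_def algebra_simps)
  also have "\<dots> = modn (int (at P i) + c * int k) n"
    using arith_prog_at[OF assms] modn_add_modn[OF \<open>0 < n\<close>] by (simp add: n_def)
  finally show ?thesis by (simp add: j_def n_def)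
qed

lemma arith_prog_at_modn_add_pred:
  assumes "arith_prog P k" "(1 + c * int k) mod int (length P) = 0" "1 \<le> i" "i \<le> length P"
  shows "at P (modn (int i + c) (length P)) = modn (int (at P i) - 1) (length P)"
proof -
  have "(int (at P i) + c * int k) mod int (length P)
        = (int (at P i) - 1 + (1 + c * int k)) mod int (length P)"
    by (simp add: algebra_simps)
  also have "\<dots> = (int (at P i) - 1) mod int (length P)"
    using mod_add_right_eq[of "int (at P i) - 1" "1 + c * int k" "int (length P)"] assms(2)
    by simp
  finally show ?thesis
    using arith_prog_at_modn_add[OF assms(1,3,4)] modn_cong by metis
qed

lemma arith_prog_map_modn_add:
  assumes "arith_prog P k"
  shows "arith_prog (map (\<lambda>p. modn (int p + c) (length P)) P) k"
proof -
  define n where "n = length P"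
  have "0 < n" using assms by (cases P) (auto simp: arith_prog_def Let_def n_def)
  have step: "modn (int (modn (int (at P i) + int k) n) + c) n
              = modn (int (modn (int (at P i) + c) n) + int k) n" for i
    using modn_add_modn[OF \<open>0 < n\<close>, of "int (at P i) + int k" c]
          modn_add_modn[OF \<open>0 < n\<close>, of "int (at P i) + c" "int k"]
    by (simp add: algebra_simps)
  show ?thesis
    using assms permutation_map_modn_add[of P n c] arith_prog_step[OF assms] step
    by (auto simp: arith_prog_def Let_def at_map n_def)
qed

lemma least_suffix_first_less_last:
  assumes "is_suffix_array T SA" "at SA 1 = 1" "2 \<le> length T"
  shows "at T 1 < at T (length T)"
proof -
  have perm: "is_permutation_1n SA (length T)"
    using assms(1) by (simp add: is_suffix_array_def)
  obtain j where j: "1 \<le> j" "j \<le> length T" "at SA j = length T"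
    using permutation_at_surj[OF perm, of "length T"] assms(3) by auto
  with assms have "1 < j" by (cases "j = 1") auto
  then have "suffix_at T 1 < suffix_at T (length T)"
    using is_suffix_array_less[OF assms(1), of 1 j] assms(2) j by simp
  then show ?thesis
    using assms(3) by (simp add: suffix_at_eq_Cons)
qed

lemma binary_least_suffix_first_last:
  assumes "is_suffix_array T SA" "at SA 1 = 1" "2 \<le> length T" "set T \<subseteq> {0, 1}"
  shows "at T 1 = 0" "at T (length T) = 1"
proof -
  have "0 < length T" using assms(3) by linarith
  then have "at T 1 \<in> set T" "at T (length T) \<in> set T" by (simp_all add: at_def)
  moreover have "at T 1 < at T (length T)"
    using least_suffix_first_less_last[OF assms(1-3)] .
  ultimately show "at T 1 = 0" "at T (length T) = 1"
    using assms(4) by auto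
qed

lemma binary_suffix_array_first_letter:
  assumes "is_suffix_array T SA" "set T \<subseteq> {0, 1}" "at T (length T) = 1"
    and j: "1 \<le> j" "j \<le> length T" "at SA j = length T"
    and i: "1 \<le> i" "i \<le> length T"
  shows "at T (at SA i) = 0 \<longleftrightarrow> i < j"
proof -
  have "at SA i \<in> {1..length T}"
    using assms(1) i by (intro permutation_at_mem) (auto simp: is_suffix_array_def)
  then have si: "suffix_at T (at SA i) = at T (at SA i) # drop (at SA i) T"
    and "at T (at SA i) \<in> set T"
    by (auto simp: suffix_at_eq_Cons at_def)
  then have "at T (at SA i) \<in> {0, 1}" using assms(2) by blast
  have sn: "suffix_at T (length T) = [1]"
    using assms(3) j by (simp add: suffix_at_eq_Cons)
  consider "i < j" | "i = j" | "j < i" by linarith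
  then show ?thesis
  proof cases
    case 1
    then have "at T (at SA i) # drop (at SA i) T < [1]"
      using is_suffix_array_less[OF assms(1) i(1) 1 j(2)] si sn j by simp
    then show ?thesis using 1 by auto
  next
    case 2
    then show ?thesis using j(3) assms(3) by simp
  next
    case 3
    then have "[1] < at T (at SA i) # drop (at SA i) T"
      using is_suffix_array_less[OF assms(1) j(1) 3 i(2)] si sn j by simp
    then show ?thesis using 3 by auto
  qed
qed

lemma binary_suffix_array_at_count:
  assumes "is_suffix_array T SA" "set T \<subseteq> {0, 1}" "T \<noteq> []" "at T (length T) = 1"
  shows "at SA (count_list T 0 + 1) = length T"
proof -
  have perm: "is_permutation_1n SA (length T)"
    using assms(1) by (simp add: is_suffix_array_def)
  have "length T \<in> {1..length T}" using assms(3) by (simp add: Suc_le_eq)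
  then obtain j where j: "1 \<le> j" "j \<le> length T" "at SA j = length T"
    by (rule permutation_at_surj[OF perm])
  have "count_list T 0 = count_list (map (at T) SA) 0"
    using mset_map_at_permutation[OF perm] by (metis count_mset)
  also have "\<dots> = card {i. i < length T \<and> at T (SA ! i) = 0}"
    unfolding count_list_eq_length_filter length_filter_conv_card
    using perm by (intro arg_cong[where f = card]) (auto simp: is_permutation_1n_def)
  also have "{i. i < length T \<and> at T (SA ! i) = 0} = {..<j - 1}"
    using binary_suffix_array_first_letter[OF assms(1,2,4) j, of "Suc _"] j
    by (auto simp: at_def)
  finally show ?thesis using j by simp
qed

lemma binary_suffix_array_count_ratio:
  assumes "is_suffix_array T SA" "arith_prog SA k" "at SA 1 = 1"
    and "set T \<subseteq> {0, 1}" "T \<noteq> []" "at T (length T) = 1"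
  shows "(1 + int (count_list T 0) * int k) mod int (length T) = 0"
proof -
  define m where "m = count_list T 0"
  have len: "length SA = length T"
    using assms(1) by (simp add: is_suffix_array_def is_permutation_1n_def)
  have "at T (length T) \<in> set T" using assms(5) by (simp add: at_def)
  then have "m < length T"
    using assms(6) length_filter_less[of 1 T "(=) 0"] by (simp add: m_def count_list_eq_length_filter)
  then have "at SA (m + 1) = modn (1 + int m * int k) (length T)"
    using arith_prog_at[OF assms(2), of "m + 1"] assms(3) len by simp
  moreover have "at SA (m + 1) = length T"
    using binary_suffix_array_at_count[OF assms(1,4,5,6)] by (simp add: m_def)
  ultimately have "int (length T) mod int (length T) = (1 + int m * int k) mod int (length T)"
    using int_modn_mod[of "length T" "1 + int m * int k"] assms(5) by simp
  then show ?thesis by (simp add: m_def)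
qed

lemma append_zero_less_append_zero: "(xs :: nat list) < ys \<Longrightarrow> xs @ [0] < ys @ [0]"
proof (induction xs arbitrary: ys)
  case Nil
  then obtain b ys' where "ys = b # ys'" by (cases ys) auto
  then show ?case by (cases "b = 0"; cases ys') auto
next
  case (Cons a xs)
  then obtain b ys' where "ys = b # ys'" by (cases ys) auto
  with Cons show ?case by auto
qed

lemma suffix_at_rotate1:
  assumes "1 \<le> p" "p \<le> length T"
  shows "suffix_at (rotate1 T) (modn (int p - 1) (length T))
           = (if p = 1 then [at T 1] else suffix_at T p @ [at T 1])"
  using assms modn_pred[OF assms]
  by (cases T) (auto simp: suffix_at_def at_def drop_Cons' not_le)

lemma at_rotate1:
  assumes "1 \<le> q" "q \<le> length T"
  shows "at (rotate1 T) (modn (int q - 1) (length T)) = at T q"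
  using assms modn_pred[OF assms]
  by (cases T) (auto simp: at_def nth_append nth_Cons')

lemma suffix_array_rotate1:
  assumes "at T 1 = 0" "at (suffix_array T) 1 = 1"
  shows "suffix_array (rotate1 T) = map (\<lambda>p. modn (int p - 1) (length T)) (suffix_array T)"
proof (rule suffix_array_eqI)
  define n where "n = length T"
  define P where "P = suffix_array T"
  have saP: "is_suffix_array T P" by (simp add: P_def is_suffix_array_suffix_array)
  then have perm: "is_permutation_1n P n" by (simp add: is_suffix_array_def n_def)
  have suf: "suffix_at (rotate1 T) (modn (int (at P i) - 1) n)
               = (if at P i = 1 then [0] else suffix_at T (at P i) @ [0])"
    if "1 \<le> i" "i \<le> n" for i
    using suffix_at_rotate1 permutation_at_mem[OF perm that] assms(1) by (simp add: n_def)
  have "lex_less (suffix_at (rotate1 T) (modn (int (at P i) - 1) n))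
                 (suffix_at (rotate1 T) (modn (int (at P j) - 1) n))"
    if ij: "1 \<le> i" "i < j" "j \<le> n" for i j
  proof -
    have "at P j \<noteq> 1"
      using permutation_at_inj[OF perm, of j 1] assms(2) ij by (auto simp: P_def)
    then have sj: "suffix_at (rotate1 T) (modn (int (at P j) - 1) n)
                     = (at T (at P j) # drop (at P j) T) @ [0]"
      using suf[of j] permutation_at_mem[OF perm, of j] ij by (simp add: suffix_at_eq_Cons n_def)
    show ?thesis
    proof (cases "i = 1")
      case True
      then show ?thesis
        using suf[of i] sj assms(2) ij
        by (cases "at T (at P j) = 0"; cases "drop (at P j) T") (auto simp: lex_less_iff_less P_def)
    next
      case False
      then have "at P i \<noteq> 1"
        using permutation_at_inj[OF perm, of i 1] assms(2) ij by (auto simp: P_def)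
      moreover have "suffix_at T (at P i) < suffix_at T (at P j)"
        using is_suffix_array_less[OF saP] ij by (simp add: n_def)
      ultimately show ?thesis
        using suf[of i] suf[of j] \<open>at P j \<noteq> 1\<close> ij append_zero_less_append_zero
        by (simp add: lex_less_iff_less)
    qed
  qed
  then show "is_suffix_array (rotate1 T) (map (\<lambda>p. modn (int p - 1) (length T)) (suffix_array T))"
    using permutation_map_modn_add[OF perm, of "-1"] perm
    by (auto simp: is_suffix_array_def at_map is_permutation_1n_def n_def P_def)
qed

lemma bwt_rotate1:
  assumes "suffix_array (rotate1 T) = map (\<lambda>p. modn (int p - 1) (length T)) (suffix_array T)"
  shows "bwt (rotate1 T) = bwt T"
proof -
  have "set (suffix_array T) = {1..length T}"
    using is_suffix_array_suffix_array[of T] by (simp add: is_suffix_array_def is_permutation_1n_def)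
  moreover have "at (rotate1 T) (modn (int (modn (int p - 1) (length T)) - 1) (length T))
                   = at T (modn (int p - 1) (length T))" if "p \<in> {1..length T}" for p
  proof -
    have "0 < length T" using that by auto
    then show ?thesis using modn_bounds[of "length T" "int p - 1"] by (intro at_rotate1) auto
  qed
  ultimately show ?thesis
    unfolding bwt_def assms by (auto intro!: map_cong)
qed

theorem lemma8:
  fixes T :: "nat list" and n k :: nat
  assumes "n \<ge> 2" and "length T = n" and "set T \<subseteq> {0, 1}"
    and "arith_prog (suffix_array T) k"
    and "at (suffix_array T) 1 = 1"
  shows "let P = suffix_array T; m = count_list T 0; T' = drop 1 T @ [T ! 0];
             S = suffix_array T' in
           (\<forall>i\<in>{1..n}. at S i = modn (int (at P i) - 1) n) \<and>
           (\<forall>i\<in>{1..n}. at S i = at P (modn (int i + int m) n)) \<and>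
           at S 1 = n \<and> arith_prog S k \<and>
           bwt T = bwt T'"
proof -
  define P where "P = suffix_array T"
  define m where "m = count_list T 0"
  have saP: "is_suffix_array T P" by (simp add: P_def is_suffix_array_suffix_array)
  have lenP: "length P = n" and P1: "at P 1 = 1" and apP: "arith_prog P k"
    using saP assms(2,4,5) by (simp_all add: P_def is_suffix_array_def is_permutation_1n_def)
  have first: "at T 1 = 0" and last: "at T n = 1"
    using binary_least_suffix_first_last[OF saP P1] assms(1-3) by auto
  have S: "suffix_array (rotate1 T) = map (\<lambda>p. modn (int p - 1) n) P"
    using suffix_array_rotate1[OF first assms(5)] by (simp add: P_def assms(2))
  have atS: "at (suffix_array (rotate1 T)) i = modn (int (at P i) - 1) n" if "i \<in> {1..n}" for i
    using that by (simp add: S at_map lenP)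
  have "T \<noteq> []" using assms(1,2) by auto
  then have "(1 + int m * int k) mod int (length P) = 0"
    using binary_suffix_array_count_ratio[OF saP apP P1 assms(3)] last assms(2)
    by (simp add: m_def lenP)
  then have rotation: "at P (modn (int i + int m) n) = modn (int (at P i) - 1) n"
    if "i \<in> {1..n}" for i
    using arith_prog_at_modn_add_pred[OF apP] that lenP by simp
  have rot: "drop 1 T @ [T ! 0] = rotate1 T"
    using assms(1,2) by (cases T) auto
  show ?thesis
    unfolding Let_def rot P_def[symmetric] m_def[symmetric]
  proof (intro conjI ballI)
    show "at (suffix_array (rotate1 T)) 1 = n"
      using atS[of 1] P1 modn_pred[of 1 n] assms(1) by simp
    show "arith_prog (suffix_array (rotate1 T)) k"
      using arith_prog_map_modn_add[OF apP, of "-1"] by (simp add: S lenP)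
    show "bwt T = bwt (rotate1 T)"
      using bwt_rotate1 S by (simp add: P_def assms(2))
  qed (simp_all add: atS rotation)
qed

end
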